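(* Consider the deterministic split-node max-neighbour algorithm described in the context, on a dynamic graph $(G_r)_{r\ge1}$ with node set $V$. For every round $r\ge1$ and every edge $e=(u,v)\in E_r$, there exists an edge $e'\in E_r$ that connects at round $r$ (in one of its orientations) such that $e'$ is within $3$ hops of $e$ in $G_r$ and $d_{w_{r-1}}(e')\ge d_{w_{r-1}}(e)$.
   Context: Setting: a fixed set $V$ of $n$ nodes, a sequence of connected graphs $G_r=(V,E_r)$ ($r\ge1$), $N_r(v)$ the neighbours of $v$ in $G_r$, non-negative real loads $w_0(v)$, and $w_r(v)$ the load of $v$ at the end of round $r$. For an edge or pair $(x,y)$, $d_w(x,y)=|w(x)-w(y)|$. Algorithm: each node $v$ is split into two virtual nodes $v_s$ (sender) and $v_a$ (receiver). In round $r$: set $w_r^1(v_s)=w_r^1(v_a)=w_{r-1}(v)/2$. Each $v_s$ sends a proposal to $u_a$ where $u\in N_r(v)$ maximizes $|w_{r-1}(u)-w_{r-1}(v)|$ (ties broken by a fixed deterministic rule). Each $v_a$ that received proposals accepts exactly one, from $u_s$ with $u$ maximizing $|w_{r-1}(u)-w_{r-1}(v)|$ among proposers (deterministic tie-breaking). For each accepted pair $(u_s,v_a)$, set both virtual loads to $(w_r^1(u_s)+w_r^1(v_a))/2$; other virtual nodes keep their value; then $w_r(v)$ is the sum of the two virtual loads of $v$. An ordered pair $(u,v)$ connects at round $r$ if $u_s$'s proposal to $v_a$ was accepted in round $r$. *)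

theory Defs
  imports Complex_Main
begin

(* Dynamic graph: E r is the (symmetric, irreflexive) edge relation of G_r on node set V.
   P r v : the node u such that v_s proposes to u_a in round r (only meaningful if v has
           a neighbour in G_r).
   A r v : the node u such that v_a accepts the proposal of u_s in round r (only
           meaningful if v_a received a proposal).
   Tie-breaking rules are modelled by arbitrary selection functions P, A satisfying
   the maximisation conditions (see the theorem). *)

definition proposes :: "'a set \<Rightarrow> (nat \<Rightarrow> 'a \<Rightarrow> 'a \<Rightarrow> bool) \<Rightarrow> (nat \<Rightarrow> 'a \<Rightarrow> 'a)
    \<Rightarrow> nat \<Rightarrow> 'a \<Rightarrow> 'a \<Rightarrow> bool" where
  "proposes V E P r u v \<longleftrightarrow> u \<in> V \<and> v \<in> V \<and> E r u v \<and> P r u = v"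

definition connects :: "'a set \<Rightarrow> (nat \<Rightarrow> 'a \<Rightarrow> 'a \<Rightarrow> bool) \<Rightarrow> (nat \<Rightarrow> 'a \<Rightarrow> 'a)
    \<Rightarrow> (nat \<Rightarrow> 'a \<Rightarrow> 'a) \<Rightarrow> nat \<Rightarrow> 'a \<Rightarrow> 'a \<Rightarrow> bool" where
  "connects V E P A r u v \<longleftrightarrow> proposes V E P r u v \<and> A r v = u"

text \<open>Load after one round r, given the loads w at the end of round r-1.
  Virtual loads start at w v / 2; an accepted pair (u_s, v_a) both get
  (w u / 2 + w v / 2) / 2; the new load is the sum of the two virtual loads.\<close>
definition round_step :: "'a set \<Rightarrow> (nat \<Rightarrow> 'a \<Rightarrow> 'a \<Rightarrow> bool) \<Rightarrow> (nat \<Rightarrow> 'a \<Rightarrow> 'a)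
    \<Rightarrow> (nat \<Rightarrow> 'a \<Rightarrow> 'a) \<Rightarrow> nat \<Rightarrow> ('a \<Rightarrow> real) \<Rightarrow> 'a \<Rightarrow> real" where
  "round_step V E P A r w v =
     (if connects V E P A r v (P r v) then (w v / 2 + w (P r v) / 2) / 2 else w v / 2)
   + (if connects V E P A r (A r v) v then (w (A r v) / 2 + w v / 2) / 2 else w v / 2)"

fun load :: "'a set \<Rightarrow> (nat \<Rightarrow> 'a \<Rightarrow> 'a \<Rightarrow> bool) \<Rightarrow> (nat \<Rightarrow> 'a \<Rightarrow> 'a)
    \<Rightarrow> (nat \<Rightarrow> 'a \<Rightarrow> 'a) \<Rightarrow> ('a \<Rightarrow> real) \<Rightarrow> nat \<Rightarrow> 'a \<Rightarrow> real" where
  "load V E P A w0 0 = w0"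
| "load V E P A w0 (Suc r) = round_step V E P A (Suc r) (load V E P A w0 r)"

text \<open>e' is within k hops of e in graph G: there is a walk x_0,...,x_m in G with
  1 <= m <= k whose first edge is e and whose last edge is e' (as unordered pairs).\<close>
definition within_hops :: "('a \<Rightarrow> 'a \<Rightarrow> bool) \<Rightarrow> nat \<Rightarrow> 'a \<times> 'a \<Rightarrow> 'a \<times> 'a \<Rightarrow> bool" where
  "within_hops G k e e' \<longleftrightarrow>
     (\<exists>xs. 2 \<le> length xs \<and> length xs \<le> k + 1 \<and>
        (\<forall>i. Suc i < length xs \<longrightarrow> G (xs ! i) (xs ! Suc i)) \<and>
        {xs ! 0, xs ! 1} = {fst e, snd e} \<and>
        {xs ! (length xs - 2), xs ! (length xs - 1)} = {fst e', snd e'})"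

end

theory Submission
  imports Defs
begin

text \<open>Follow the proposals from the edge \<open>{u, v}\<close>: the sender \<open>u\<^sub>s\<close> proposes to a neighbour
  \<open>p\<close> of maximal load difference, so \<open>p\<^sub>a\<close> receives a proposal and accepts the one from
  the proposer \<open>a\<close> of maximal load difference to \<open>p\<close>. Hence \<open>(a, p)\<close> connects,
  \<open>v, u, p, a\<close> is a walk of three hops, and \<open>d(u, v) \<le> d(u, p) \<le> d(a, p)\<close>.\<close>

lemma within_hops_swap_first: "within_hops G k (b, a) e \<longleftrightarrow> within_hops G k (a, b) e"
  unfolding within_hops_def by (simp add: insert_commute)

lemma within_hops_swap_second: "within_hops G k e (b, a) \<longleftrightarrow> within_hops G k e (a, b)"
  unfolding within_hops_def by (simp add: insert_commute)

lemma within_hops_three_edges: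
  assumes "G x0 x1" "G x1 x2" "G x2 x3"
  shows "within_hops G 3 (x0, x1) (x2, x3)"
  unfolding within_hops_def
proof (intro exI[of _ "[x0, x1, x2, x3]"] conjI allI impI)
  fix i assume "Suc i < length [x0, x1, x2, x3]"
  then have "i = 0 \<or> i = 1 \<or> i = 2" by auto
  then show "G ([x0, x1, x2, x3] ! i) ([x0, x1, x2, x3] ! Suc i)" using assms by auto
qed auto

lemma connects_within_three_hops_of_edge:
  fixes w :: "'a \<Rightarrow> real"
  assumes E_in_V: "\<forall>x y. E r x y \<longrightarrow> x \<in> V \<and> y \<in> V"
    and E_sym: "\<forall>x y. E r x y \<longrightarrow> E r y x"
    and P_max: "\<forall>x\<in>V. (\<exists>y. E r x y) \<longrightarrow>
         E r x (P r x) \<and> (\<forall>y. E r x y \<longrightarrow> \<bar>w y - w x\<bar> \<le> \<bar>w (P r x) - w x\<bar>)"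
    and A_max: "\<forall>x\<in>V. (\<exists>y. proposes V E P r y x) \<longrightarrow>
         proposes V E P r (A r x) x \<and>
         (\<forall>y. proposes V E P r y x \<longrightarrow> \<bar>w y - w x\<bar> \<le> \<bar>w (A r x) - w x\<bar>)"
    and edge: "E r u v"
  shows "\<exists>x y. E r x y \<and> connects V E P A r x y \<and> within_hops (E r) 3 (u, v) (x, y) \<and>
           \<bar>w x - w y\<bar> \<ge> \<bar>w u - w v\<bar>"
proof -
  define p where "p = P r u"
  define a where "a = A r p"
  have "u \<in> V" using E_in_V edge by blast
  then have u_p: "E r u p" and d_uv_le_d_up: "\<bar>w v - w u\<bar> \<le> \<bar>w p - w u\<bar>"
    using P_max edge unfolding p_def by blast+
  have "p \<in> V" using E_in_V u_p by blast
  have "proposes V E P r u p"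
    unfolding proposes_def p_def using \<open>u \<in> V\<close> \<open>p \<in> V\<close> u_p p_def by simp
  then have a_p: "proposes V E P r a p" and d_up_le_d_ap: "\<bar>w u - w p\<bar> \<le> \<bar>w a - w p\<bar>"
    using A_max \<open>p \<in> V\<close> unfolding a_def by blast+
  have "connects V E P A r a p"
    unfolding connects_def a_def using a_p a_def by simp
  moreover have "E r a p" using a_p unfolding proposes_def by simp
  moreover have "within_hops (E r) 3 (u, v) (a, p)"
    using within_hops_three_edges[of "E r" v u p a] E_sym edge u_p \<open>E r a p\<close>
    by (simp add: within_hops_swap_first within_hops_swap_second)
  moreover have "\<bar>w a - w p\<bar> \<ge> \<bar>w u - w v\<bar>"
    using d_uv_le_d_up d_up_le_d_ap by (simp add: abs_minus_commute)
  ultimately show ?thesis by blast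
qed

theorem claim2:
  fixes V :: "'a set" and E :: "nat \<Rightarrow> 'a \<Rightarrow> 'a \<Rightarrow> bool"
    and w0 :: "'a \<Rightarrow> real" and P A :: "nat \<Rightarrow> 'a \<Rightarrow> 'a"
  assumes finV: "finite V"
    and w0_nonneg: "\<forall>v\<in>V. w0 v \<ge> 0"
    and E_in_V: "\<forall>r\<ge>1. \<forall>u v. E r u v \<longrightarrow> u \<in> V \<and> v \<in> V"
    and E_sym: "\<forall>r\<ge>1. \<forall>u v. E r u v \<longrightarrow> E r v u"
    and E_irrefl: "\<forall>r\<ge>1. \<forall>u. \<not> E r u u"
    and E_conn: "\<forall>r\<ge>1. \<forall>u\<in>V. \<forall>v\<in>V. (E r)\<^sup>*\<^sup>* u v"
    and P_max: "\<forall>r\<ge>1. \<forall>v\<in>V. (\<exists>u. E r v u) \<longrightarrow>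
         E r v (P r v) \<and>
         (\<forall>u. E r v u \<longrightarrow>
            \<bar>load V E P A w0 (r - 1) u - load V E P A w0 (r - 1) v\<bar>
            \<le> \<bar>load V E P A w0 (r - 1) (P r v) - load V E P A w0 (r - 1) v\<bar>)"
    and A_max: "\<forall>r\<ge>1. \<forall>v\<in>V. (\<exists>u. proposes V E P r u v) \<longrightarrow>
         proposes V E P r (A r v) v \<and>
         (\<forall>u. proposes V E P r u v \<longrightarrow>
            \<bar>load V E P A w0 (r - 1) u - load V E P A w0 (r - 1) v\<bar>
            \<le> \<bar>load V E P A w0 (r - 1) (A r v) - load V E P A w0 (r - 1) v\<bar>)"
    and r_pos: "r \<ge> 1"
    and edge: "E r u v"
  shows "\<exists>x y. E r x y \<and> (connects V E P A r x y \<or> connects V E P A r y x) \<and>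
           within_hops (E r) 3 (u, v) (x, y) \<and>
           \<bar>load V E P A w0 (r - 1) x - load V E P A w0 (r - 1) y\<bar>
           \<ge> \<bar>load V E P A w0 (r - 1) u - load V E P A w0 (r - 1) v\<bar>"
proof -
  have "\<exists>x y. E r x y \<and> connects V E P A r x y \<and> within_hops (E r) 3 (u, v) (x, y) \<and>
      \<bar>load V E P A w0 (r - 1) x - load V E P A w0 (r - 1) y\<bar>
      \<ge> \<bar>load V E P A w0 (r - 1) u - load V E P A w0 (r - 1) v\<bar>"
    using r_pos E_in_V E_sym P_max A_max edge
    by (intro connects_within_three_hops_of_edge) auto
  then show ?thesis by blast
qed

end
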